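(* Let $q>0$. Let $I=(i_1,\dots,i_k)$ and $I'=(i'_1,\dots,i'_\ell)$ be two increasing sequences of positive integers with $i_k<i'_1$, and let $\pi\sim\mu_{n,q}$ for some $n\ge i'_\ell$. Then $\pi_I$ and $\pi_{I'}$ are independent.
   Context: For $q>0$ and $n\ge1$, $\mu_{n,q}(\pi)=q^{\mathrm{inv}(\pi)}/Z_{n,q}$ on $S_n$, with $\mathrm{inv}(\pi)$ the number of pairs $i<j$ with $\pi(i)>\pi(j)$ and $Z_{n,q}$ a normalizing constant. For a permutation $\pi$ and an increasing sequence of indices $I=(i_1,\dots,i_k)$, $\pi_I\in S_k$ denotes the induced relative ordering: $\pi_I(j)>\pi_I(j')$ if and only if $\pi(i_j)>\pi(i_{j'})$. *)

theory Defs
  imports "HOL-Combinatorics.Combinatorics"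
begin

definition Sn :: "nat \<Rightarrow> (nat \<Rightarrow> nat) set" where
  "Sn n = {p. p permutes {1..n}}"

definition inv_count :: "nat \<Rightarrow> (nat \<Rightarrow> nat) \<Rightarrow> nat" where
  "inv_count n p = card {(i, j). i \<in> {1..n} \<and> j \<in> {1..n} \<and> i < j \<and> p i > p j}"

definition Z :: "nat \<Rightarrow> real \<Rightarrow> real" where
  "Z n q = (\<Sum>p\<in>Sn n. q ^ inv_count n p)"

definition mallows :: "nat \<Rightarrow> real \<Rightarrow> (nat \<Rightarrow> nat) \<Rightarrow> real" where
  "mallows n q p = q ^ inv_count n p / Z n q"

definition mallows_prob :: "nat \<Rightarrow> real \<Rightarrow> ((nat \<Rightarrow> nat) \<Rightarrow> bool) \<Rightarrow> real" where
  "mallows_prob n q A = (\<Sum>p\<in>{p\<in>Sn n. A p}. mallows n q p)"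

definition pattern :: "(nat \<Rightarrow> nat) \<Rightarrow> nat list \<Rightarrow> (nat \<Rightarrow> nat)" where
  "pattern p I = (\<lambda>j. if j \<in> {1..length I}
      then card {j' \<in> {1..length I}. p (I ! (j' - 1)) \<le> p (I ! (j - 1))}
      else j)"

end

theory Submission
  imports Defs
begin

text \<open>
  Put \<open>m = last I\<close>. Every \<open>p \<in> S\<^sub>n\<close> factors uniquely as \<open>p = r \<circ> (a \<circ> b)\<close>, where \<open>a\<close> and
  \<open>b\<close> record the relative order of \<open>p\<close> on the blocks \<open>{1..m}\<close> and \<open>{m+1..n}\<close>, and \<open>r\<close> is
  increasing on each block. Inversions inside a block are counted by \<open>a\<close> resp. \<open>b\<close> and
  inversions across the blocks by \<open>r\<close>, so \<open>inv p = inv r + inv a + inv b\<close>. Hence the Mallows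
  weight of \<open>p\<close> is a product of weights of \<open>r\<close>, \<open>a\<close> and \<open>b\<close>; since the pattern on \<open>I\<close> depends
  only on \<open>a\<close> and the pattern on \<open>I'\<close> only on \<open>b\<close>, the two patterns are independent.
\<close>

lemma permutes_disjoint_commute:
  assumes a: "a permutes S" and b: "b permutes T" and "S \<inter> T = {}"
  shows "a \<circ> b = b \<circ> a"
proof
  fix x
  have "a (b x) = b (a x)"
  proof (cases "x \<in> S")
    case True
    then have "a x \<in> S" using permutes_in_image[OF a] by simp
    with True have "x \<notin> T" "a x \<notin> T" using \<open>S \<inter> T = {}\<close> by auto
    then show ?thesis using permutes_not_in[OF b] by simp
  next
    case False
    have "b x \<notin> S"
      using False permutes_in_image[OF b, of x] permutes_not_in[OF b, of x] \<open>S \<inter> T = {}\<close>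
      by (cases "x \<in> T") auto
    with False show ?thesis using permutes_not_in[OF a] by simp
  qed
  then show "(a \<circ> b) x = (b \<circ> a) x" by simp
qed

lemma sum_product_triple:
  fixes f g h :: "_ \<Rightarrow> 'a::comm_semiring_1"
  shows "(\<Sum>(x, y, z)\<in>A \<times> B \<times> C. f x * g y * h z) = sum f A * sum g B * sum h C"
proof -
  have "sum f A * sum g B * sum h C = (\<Sum>x\<in>A. \<Sum>y\<in>B. f x * g y) * sum h C"
    by (simp only: sum_product)
  also have "\<dots> = (\<Sum>x\<in>A. \<Sum>y\<in>B. \<Sum>z\<in>C. f x * g y * h z)"
    by (simp only: sum_distrib_right) (simp only: sum_distrib_left)
  finally show ?thesis by (simp add: sum.cartesian_product)
qed

lemma sorted_wrt_less_le_last: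
  "sorted_wrt (<) (xs :: 'a::linorder list) \<Longrightarrow> x \<in> set xs \<Longrightarrow> x \<le> last xs"
  by (induction xs) (auto simp: less_imp_le)

lemma sorted_wrt_less_hd_le:
  "sorted_wrt (<) (xs :: 'a::linorder list) \<Longrightarrow> x \<in> set xs \<Longrightarrow> hd xs \<le> x"
  by (induction xs) (auto simp: less_imp_le)

definition same_order_on :: "nat set \<Rightarrow> (nat \<Rightarrow> nat) \<Rightarrow> (nat \<Rightarrow> nat) \<Rightarrow> bool" where
  "same_order_on S p p' \<longleftrightarrow> (\<forall>i\<in>S. \<forall>j\<in>S. p i < p j \<longleftrightarrow> p' i < p' j)"

lemma same_order_on_strict_mono_comp:
  assumes "strict_mono_on S r" "\<alpha> permutes S" "\<And>i. i \<in> S \<Longrightarrow> p i = r (\<alpha> i)"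
  shows "same_order_on S p \<alpha>"
  using assms permutes_in_image[OF assms(2)]
  by (simp add: same_order_on_def strict_mono_on_less)

lemma strict_mono_on_if_same_order_inv:
  assumes \<alpha>: "\<alpha> permutes S" and "same_order_on S p \<alpha>"
    and r: "\<And>x. x \<in> S \<Longrightarrow> r x = p (inv \<alpha> x)"
  shows "strict_mono_on S r"
proof (rule strict_mono_onI)
  fix x y assume "x \<in> S" "y \<in> S" "x < y"
  moreover have "\<alpha> (inv \<alpha> z) = z" "inv \<alpha> z \<in> S" if "z \<in> S" for z
    using that permutes_inverses(1)[OF \<alpha>] permutes_in_image[OF permutes_inv[OF \<alpha>]] by auto
  ultimately show "r x < r y"
    using \<open>same_order_on S p \<alpha>\<close> r by (simp add: same_order_on_def)
qed

lemma pattern_cong_same_order: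
  assumes "set I \<subseteq> S" "same_order_on S p p'"
  shows "pattern p I = pattern p' I"
proof -
  have "p (I ! j') \<le> p (I ! j) \<longleftrightarrow> p' (I ! j') \<le> p' (I ! j)"
    if "j < length I" "j' < length I" for j j'
  proof -
    have "I ! j \<in> S" "I ! j' \<in> S" using assms(1) that by auto
    then show ?thesis using assms(2) by (simp add: same_order_on_def not_less[symmetric])
  qed
  then show ?thesis
    unfolding pattern_def by (intro ext if_cong arg_cong[where f=card] Collect_cong) auto
qed

definition block_rank :: "(nat \<Rightarrow> nat) \<Rightarrow> nat \<Rightarrow> nat \<Rightarrow> nat \<Rightarrow> nat" where
  "block_rank p a b i = (if i \<in> {a..b} then a + card {k \<in> {a..b}. p k < p i} else i)"

lemma block_rank_less_iff:
  assumes "i \<in> {a..b}" "j \<in> {a..b}"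
  shows "block_rank p a b i < block_rank p a b j \<longleftrightarrow> p i < p j"
proof
  assume "p i < p j"
  then have "{k \<in> {a..b}. p k < p i} \<subset> {k \<in> {a..b}. p k < p j}"
    using assms by auto
  then have "card {k \<in> {a..b}. p k < p i} < card {k \<in> {a..b}. p k < p j}"
    by (intro psubset_card_mono) auto
  then show "block_rank p a b i < block_rank p a b j"
    using assms by (simp add: block_rank_def)
next
  assume "block_rank p a b i < block_rank p a b j"
  then have "\<not> card {k \<in> {a..b}. p k < p j} \<le> card {k \<in> {a..b}. p k < p i}"
    using assms by (simp add: block_rank_def)
  then have "\<not> {k \<in> {a..b}. p k < p j} \<subseteq> {k \<in> {a..b}. p k < p i}"
    using card_mono[of "{k \<in> {a..b}. p k < p i}" "{k \<in> {a..b}. p k < p j}"] by auto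
  then show "p i < p j" by auto
qed

lemma block_rank_permutes:
  assumes "inj_on p {a..b}"
  shows "block_rank p a b permutes {a..b}"
proof (rule bij_imp_permutes)
  have "block_rank p a b i \<in> {a..b}" if "i \<in> {a..b}" for i
  proof -
    have "card {k \<in> {a..b}. p k < p i} \<le> card ({a..b} - {i})"
      by (intro card_mono) auto
    then show ?thesis using that by (simp add: block_rank_def) arith
  qed
  then have maps_to: "block_rank p a b ` {a..b} \<subseteq> {a..b}"
    by auto
  have "inj_on (block_rank p a b) {a..b}"
  proof (rule inj_onI, rule ccontr)
    fix i j assume ij: "i \<in> {a..b}" "j \<in> {a..b}" "block_rank p a b i = block_rank p a b j" "i \<noteq> j"
    then have "p i \<noteq> p j" using assms by (auto dest: inj_onD)
    then show False
      using ij block_rank_less_iff[of i a b j p] block_rank_less_iff[of j a b i p] by auto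
  qed
  with maps_to show "bij_betw (block_rank p a b) {a..b} {a..b}"
    by (simp add: bij_betw_def endo_inj_surj)
  show "block_rank p a b x = x" if "x \<notin> {a..b}" for x
    using that by (auto simp: block_rank_def)
qed

lemma block_rank_unique:
  assumes \<alpha>: "\<alpha> permutes {a..b}" and "same_order_on {a..b} p \<alpha>"
  shows "block_rank p a b = \<alpha>"
proof
  fix i
  show "block_rank p a b i = \<alpha> i"
  proof (cases "i \<in> {a..b}")
    case False
    then show ?thesis
      unfolding block_rank_def if_not_P[OF False] using permutes_not_in[OF \<alpha> False] by simp
  next
    case True
    have "\<alpha> ` {k \<in> {a..b}. p k < p i} = \<alpha> ` {k \<in> {a..b}. \<alpha> k < \<alpha> i}"
      using \<open>same_order_on {a..b} p \<alpha>\<close> True by (auto simp: same_order_on_def)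
    also have "\<dots> = {v \<in> \<alpha> ` {a..b}. v < \<alpha> i}" by auto
    also have "\<dots> = {a..<\<alpha> i}"
      using permutes_image[OF \<alpha>] permutes_in_image[OF \<alpha>, of i] True by auto
    finally have "card (\<alpha> ` {k \<in> {a..b}. p k < p i}) = \<alpha> i - a" by simp
    then have "card {k \<in> {a..b}. p k < p i} = \<alpha> i - a"
      by (simp add: card_image permutes_inj_on[OF \<alpha>])
    moreover have "a \<le> \<alpha> i" using permutes_in_image[OF \<alpha>, of i] True by simp
    ultimately show ?thesis using True by (simp add: block_rank_def)
  qed
qed

lemma same_order_on_block_rank: "same_order_on {a..b} p (block_rank p a b)"
  by (simp add: same_order_on_def block_rank_less_iff)

definition inversions :: "(nat \<Rightarrow> nat) \<Rightarrow> nat set \<Rightarrow> nat set \<Rightarrow> nat" where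
  "inversions p X Y = (\<Sum>i\<in>X. \<Sum>j\<in>Y. of_bool (i < j \<and> p j < p i))"

lemma inv_count_eq_inversions: "inv_count n p = inversions p {1..n} {1..n}"
proof -
  have "inv_count n p = card ({1..n} \<times> {1..n} \<inter> {(i, j). i < j \<and> p j < p i})"
    unfolding inv_count_def by (rule arg_cong[where f=card]) auto
  also have "\<dots> = inversions p {1..n} {1..n}"
    unfolding inversions_def sum.cartesian_product by (simp add: case_prod_beta')
  finally show ?thesis .
qed

lemma inversions_Un_left:
  "finite X1 \<Longrightarrow> finite X2 \<Longrightarrow> X1 \<inter> X2 = {} \<Longrightarrow>
   inversions p (X1 \<union> X2) Y = inversions p X1 Y + inversions p X2 Y"
  unfolding inversions_def by (rule sum.union_disjoint)

lemma inversions_Un_right: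
  "finite Y1 \<Longrightarrow> finite Y2 \<Longrightarrow> Y1 \<inter> Y2 = {} \<Longrightarrow>
   inversions p X (Y1 \<union> Y2) = inversions p X Y1 + inversions p X Y2"
  unfolding inversions_def sum.distrib[symmetric] by (intro sum.cong refl sum.union_disjoint)

lemma inversions_eq_0:
  "(\<And>i j. i \<in> X \<Longrightarrow> j \<in> Y \<Longrightarrow> i < j \<Longrightarrow> p i < p j) \<Longrightarrow> inversions p X Y = 0"
  unfolding inversions_def by (intro sum.neutral ballI) (simp, meson less_asym)

lemma inversions_cong_same_order:
  "same_order_on S p p' \<Longrightarrow> inversions p S S = inversions p' S S"
  unfolding inversions_def same_order_on_def by (intro sum.cong refl) auto

lemma inversions_block_perms:
  assumes \<alpha>: "\<alpha> permutes X" and \<beta>: "\<beta> permutes Y"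
    and X_below_Y: "\<And>i j. i \<in> X \<Longrightarrow> j \<in> Y \<Longrightarrow> i < j"
    and "\<And>i. i \<in> X \<Longrightarrow> p i = r (\<alpha> i)" "\<And>j. j \<in> Y \<Longrightarrow> p j = r (\<beta> j)"
  shows "inversions p X Y = inversions r X Y"
proof -
  have "inversions p X Y = (\<Sum>i\<in>X. \<Sum>j\<in>Y. of_bool (r (\<beta> j) < r (\<alpha> i)))"
    unfolding inversions_def using assms(3-5) by (intro sum.cong refl) auto
  also have "\<dots> = (\<Sum>i\<in>X. \<Sum>j\<in>Y. of_bool (r j < r (\<alpha> i)))"
    by (intro sum.cong refl sum.reindex_bij_betw permutes_imp_bij[OF \<beta>])
  also have "\<dots> = (\<Sum>i\<in>X. \<Sum>j\<in>Y. of_bool (r j < r i))"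
    by (rule sum.reindex_bij_betw[OF permutes_imp_bij[OF \<alpha>],
          where g = "\<lambda>i. \<Sum>j\<in>Y. of_bool (r j < r i)"])
  also have "\<dots> = inversions r X Y"
    unfolding inversions_def using X_below_Y by (intro sum.cong refl) auto
  finally show ?thesis .
qed

locale two_blocks =
  fixes m n :: nat
  assumes m_le_n: "m \<le> n"
begin

text \<open>The minimal-length representatives of the cosets of the Young subgroup
  \<open>S\<^bsub>{1..m}\<^esub> \<times> S\<^bsub>{m+1..n}\<^esub>\<close>.\<close>

definition shuffles :: "(nat \<Rightarrow> nat) set" where
  "shuffles = {r \<in> Sn n. strict_mono_on {1..m} r \<and> strict_mono_on {Suc m..n} r}"

lemma blocks_Un: "{1..m} \<union> {Suc m..n} = {1..n}"
  using m_le_n by auto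

lemma block_perms_comp_permutes:
  assumes "a permutes {1..m}" "b permutes {Suc m..n}"
  shows "a \<circ> b permutes {1..n}"
proof (rule permutes_compose)
  show "b permutes {1..n}" by (rule permutes_subset[OF assms(2)]) auto
  show "a permutes {1..n}" by (rule permutes_subset[OF assms(1)]) (use m_le_n in auto)
qed

lemma block_perms_comp_apply_left:
  assumes "b permutes {Suc m..n}" "i \<in> {1..m}"
  shows "(a \<circ> b) i = a i"
proof -
  have "i \<notin> {Suc m..n}" using assms(2) by simp
  then show ?thesis using permutes_not_in[OF assms(1)] by simp
qed

lemma block_perms_comp_apply_right:
  assumes "a permutes {1..m}" "b permutes {Suc m..n}" "i \<in> {Suc m..n}"
  shows "(a \<circ> b) i = b i"
proof -
  have "b i \<in> {Suc m..n}" using permutes_in_image[OF assms(2)] assms(3) by simp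
  then have "b i \<notin> {1..m}" by simp
  then show ?thesis using permutes_not_in[OF assms(1)] by simp
qed

lemma inv_count_split:
  "inv_count n p = inversions p {1..m} {1..m} + inversions p {1..m} {Suc m..n}
     + inversions p {Suc m..n} {Suc m..n}"
proof -
  have "inversions p {Suc m..n} {1..m} = 0" by (rule inversions_eq_0) auto
  then show ?thesis unfolding inv_count_eq_inversions blocks_Un[symmetric]
    by (simp add: inversions_Un_left inversions_Un_right)
qed

context
  fixes r a b
  assumes r: "r \<in> shuffles" and a: "a permutes {1..m}" and b: "b permutes {Suc m..n}"
begin

lemma shuffle_comp_apply_left: "i \<in> {1..m} \<Longrightarrow> (r \<circ> (a \<circ> b)) i = r (a i)"
  using block_perms_comp_apply_left[OF b] by simp

lemma shuffle_comp_apply_right: "i \<in> {Suc m..n} \<Longrightarrow> (r \<circ> (a \<circ> b)) i = r (b i)"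
  using block_perms_comp_apply_right[OF a b] by simp

lemma same_order_on_shuffle_comp:
  "same_order_on {1..m} (r \<circ> (a \<circ> b)) a" "same_order_on {Suc m..n} (r \<circ> (a \<circ> b)) b"
  using r a b shuffle_comp_apply_left shuffle_comp_apply_right
  by (auto simp: shuffles_def intro!: same_order_on_strict_mono_comp)

lemma block_rank_shuffle_comp:
  "block_rank (r \<circ> (a \<circ> b)) 1 m = a" "block_rank (r \<circ> (a \<circ> b)) (Suc m) n = b"
  using block_rank_unique[OF a] block_rank_unique[OF b] same_order_on_shuffle_comp by auto

lemma inv_count_shuffle_comp:
  "inv_count n (r \<circ> (a \<circ> b)) = inv_count n r + inversions a {1..m} {1..m}
     + inversions b {Suc m..n} {Suc m..n}"
proof -
  have "inversions r {1..m} {1..m} = 0" "inversions r {Suc m..n} {Suc m..n} = 0"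
    using r by (auto simp: shuffles_def intro!: inversions_eq_0 dest: strict_mono_onD)
  moreover have "inversions (r \<circ> (a \<circ> b)) {1..m} {Suc m..n} = inversions r {1..m} {Suc m..n}"
    using shuffle_comp_apply_left shuffle_comp_apply_right by (intro inversions_block_perms[OF a b]) auto
  ultimately show ?thesis
    using inv_count_split[of "r \<circ> (a \<circ> b)"] inv_count_split[of r]
      inversions_cong_same_order[OF same_order_on_shuffle_comp(1)]
      inversions_cong_same_order[OF same_order_on_shuffle_comp(2)]
    by simp
qed

end

lemma block_ranks_permute:
  assumes "p \<in> Sn n"
  shows "block_rank p 1 m permutes {1..m}" "block_rank p (Suc m) n permutes {Suc m..n}"
  using assms permutes_inj_on by (auto simp: Sn_def intro!: block_rank_permutes)

definition decompose :: "(nat \<Rightarrow> nat) \<Rightarrow> (nat \<Rightarrow> nat) \<times> (nat \<Rightarrow> nat) \<times> (nat \<Rightarrow> nat)" where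
  "decompose p = (p \<circ> inv (block_rank p 1 m \<circ> block_rank p (Suc m) n),
                  block_rank p 1 m, block_rank p (Suc m) n)"

lemma comp_inv_block_ranks_in_shuffles:
  assumes p: "p \<in> Sn n"
  shows "p \<circ> inv (block_rank p 1 m \<circ> block_rank p (Suc m) n) \<in> shuffles"
proof -
  define a b where "a = block_rank p 1 m" and "b = block_rank p (Suc m) n"
  have a: "a permutes {1..m}" and b: "b permutes {Suc m..n}"
    unfolding a_def b_def using block_ranks_permute[OF p] by auto
  have "inv (a \<circ> b) = inv (b \<circ> a)"
    using permutes_disjoint_commute[OF a b] by auto
  also have "\<dots> = inv a \<circ> inv b"
    using a b by (simp add: o_inv_distrib permutes_bij)
  finally have inv_ab: "inv (a \<circ> b) = inv a \<circ> inv b" .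
  have "(p \<circ> inv (a \<circ> b)) i = p (inv a i)" if "i \<in> {1..m}" for i
    using block_perms_comp_apply_left[OF permutes_inv[OF b] that, of "inv a"] by (simp add: inv_ab)
  then have "strict_mono_on {1..m} (p \<circ> inv (a \<circ> b))"
    using same_order_on_block_rank[of 1 m p, folded a_def]
    by (intro strict_mono_on_if_same_order_inv[OF a])
  moreover have "(p \<circ> inv (a \<circ> b)) i = p (inv b i)" if "i \<in> {Suc m..n}" for i
    using block_perms_comp_apply_right[OF permutes_inv[OF a] permutes_inv[OF b] that]
    by (simp add: inv_ab)
  then have "strict_mono_on {Suc m..n} (p \<circ> inv (a \<circ> b))"
    using same_order_on_block_rank[of "Suc m" n p, folded b_def]
    by (intro strict_mono_on_if_same_order_inv[OF b])
  moreover have "p \<circ> inv (a \<circ> b) \<in> Sn n"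
    using permutes_compose[OF permutes_inv[OF block_perms_comp_permutes[OF a b]]] p
    by (simp add: Sn_def)
  ultimately show ?thesis by (simp add: shuffles_def a_def b_def)
qed

lemma decompose_in_shuffles_times_block_perms:
  "p \<in> Sn n \<Longrightarrow>
     decompose p \<in> shuffles \<times> {a. a permutes {1..m}} \<times> {b. b permutes {Suc m..n}}"
  using comp_inv_block_ranks_in_shuffles block_ranks_permute by (simp add: decompose_def)

lemma compose_decompose:
  assumes "p \<in> Sn n"
  shows "(\<lambda>(r, a, b). r \<circ> (a \<circ> b)) (decompose p) = p"
proof -
  let ?g = "block_rank p 1 m \<circ> block_rank p (Suc m) n"
  have "?g permutes {1..n}"
    by (rule block_perms_comp_permutes[OF block_ranks_permute[OF assms]])
  then have "p \<circ> inv ?g \<circ> ?g = p" by (simp add: comp_assoc permutes_inv_o)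
  then show ?thesis by (simp add: decompose_def)
qed

lemma decompose_compose:
  assumes r: "r \<in> shuffles" and a: "a permutes {1..m}" and b: "b permutes {Suc m..n}"
  shows "decompose (r \<circ> (a \<circ> b)) = (r, a, b)"
proof -
  have "r \<circ> (a \<circ> b) \<circ> inv (a \<circ> b) = r"
    using permutes_inv_o(1)[OF block_perms_comp_permutes[OF a b]] by (simp add: o_assoc[symmetric])
  then show ?thesis using block_rank_shuffle_comp[OF r a b] by (simp add: decompose_def)
qed

lemma bij_betw_shuffle_decomposition:
  "bij_betw (\<lambda>(r, a, b). r \<circ> (a \<circ> b))
     (shuffles \<times> {a. a permutes {1..m}} \<times> {b. b permutes {Suc m..n}}) (Sn n)"
proof (rule bij_betw_byWitness[where f' = decompose])
  show "(\<lambda>(r, a, b). r \<circ> (a \<circ> b)) ` (shuffles \<times> {a. a permutes {1..m}} \<times> {b. b permutes {Suc m..n}})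
          \<subseteq> Sn n"
    using block_perms_comp_permutes by (auto simp: shuffles_def Sn_def intro: permutes_compose)
  show "decompose ` Sn n \<subseteq> shuffles \<times> {a. a permutes {1..m}} \<times> {b. b permutes {Suc m..n}}"
    using decompose_in_shuffles_times_block_perms by blast
qed (auto simp: decompose_compose compose_decompose)

lemma sum_Sn_weighted_patterns:
  fixes q :: "'a::comm_semiring_1"
  assumes "set I \<subseteq> {1..m}" "set I' \<subseteq> {Suc m..n}"
  shows "(\<Sum>p\<in>Sn n. q ^ inv_count n p * f (pattern p I) * g (pattern p I'))
    = (\<Sum>r\<in>shuffles. q ^ inv_count n r)
      * (\<Sum>a | a permutes {1..m}. q ^ inversions a {1..m} {1..m} * f (pattern a I))
      * (\<Sum>b | b permutes {Suc m..n}. q ^ inversions b {Suc m..n} {Suc m..n} * g (pattern b I'))"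
    (is "_ = ?rhs")
proof -
  have "(\<Sum>p\<in>Sn n. q ^ inv_count n p * f (pattern p I) * g (pattern p I'))
      = (\<Sum>(r, a, b)\<in>shuffles \<times> {a. a permutes {1..m}} \<times> {b. b permutes {Suc m..n}}.
           q ^ inv_count n (r \<circ> (a \<circ> b)) * f (pattern (r \<circ> (a \<circ> b)) I)
             * g (pattern (r \<circ> (a \<circ> b)) I'))"
    by (subst sum.reindex_bij_betw[OF bij_betw_shuffle_decomposition, symmetric])
      (simp add: case_prod_beta')
  also have "\<dots> = (\<Sum>(r, a, b)\<in>shuffles \<times> {a. a permutes {1..m}} \<times> {b. b permutes {Suc m..n}}.
      q ^ inv_count n r * (q ^ inversions a {1..m} {1..m} * f (pattern a I))
        * (q ^ inversions b {Suc m..n} {Suc m..n} * g (pattern b I')))"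
  proof (intro sum.cong refl, clarify)
    fix r a b assume r_a_b: "r \<in> shuffles" "a permutes {1..m}" "b permutes {Suc m..n}"
    have "pattern (r \<circ> (a \<circ> b)) I = pattern a I" "pattern (r \<circ> (a \<circ> b)) I' = pattern b I'"
      using pattern_cong_same_order[OF assms(1) same_order_on_shuffle_comp(1)[OF r_a_b]]
        pattern_cong_same_order[OF assms(2) same_order_on_shuffle_comp(2)[OF r_a_b]] by auto
    then show "q ^ inv_count n (r \<circ> (a \<circ> b)) * f (pattern (r \<circ> (a \<circ> b)) I)
        * g (pattern (r \<circ> (a \<circ> b)) I')
      = q ^ inv_count n r * (q ^ inversions a {1..m} {1..m} * f (pattern a I))
        * (q ^ inversions b {Suc m..n} {Suc m..n} * g (pattern b I'))"
      by (simp add: inv_count_shuffle_comp[OF r_a_b] power_add mult_ac)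
  qed
  also have "\<dots> = ?rhs"
    by (rule sum_product_triple)
  finally show ?thesis .
qed

end

text \<open>No assumption on the denominator is needed: if it vanishes, both sides are \<open>0\<close> because
  \<open>x / 0 = 0\<close>.\<close>

lemma ratio_product_form:
  fixes W :: "'b \<Rightarrow> 'c \<Rightarrow> 'a::field"
  assumes "\<And>x y. W x y = c * u x * v y"
  shows "W x y / W x0 y0 = W x y0 / W x0 y0 * (W x0 y / W x0 y0)"
  unfolding assms by (cases "c * u x0 * v y0 = 0") (simp_all add: field_simps)

lemma finite_Sn: "finite (Sn n)"
  by (simp add: Sn_def finite_permutations)

lemma mallows_prob_eq_weighted_sum:
  "mallows_prob n q P = (\<Sum>p\<in>Sn n. q ^ inv_count n p * of_bool (P p)) / Z n q"
proof -
  have "{p \<in> Sn n. P p} = Sn n \<inter> {p. P p}" by auto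
  then have "mallows_prob n q P = (\<Sum>p\<in>Sn n \<inter> {p. P p}. q ^ inv_count n p) / Z n q"
    by (simp add: mallows_prob_def mallows_def sum_divide_distrib)
  then show ?thesis by (simp add: finite_Sn)
qed

theorem lemma2p5:
  fixes q :: real and n :: nat and I I' :: "nat list"
  assumes "q > 0"
    and "I \<noteq> []" and "I' \<noteq> []"
    and "sorted_wrt (<) I" and "sorted_wrt (<) I'"
    and "\<forall>i\<in>set I. i \<ge> 1" and "\<forall>i\<in>set I'. i \<ge> 1"
    and "last I < hd I'"
    and "n \<ge> last I'"
  shows "\<forall>\<sigma> \<tau>. mallows_prob n q (\<lambda>p. pattern p I = \<sigma> \<and> pattern p I' = \<tau>)
              = mallows_prob n q (\<lambda>p. pattern p I = \<sigma>) * mallows_prob n q (\<lambda>p. pattern p I' = \<tau>)"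
proof (intro allI)
  fix \<sigma> \<tau> :: "nat \<Rightarrow> nat"
  define m where "m = last I"
  have I_block: "set I \<subseteq> {1..m}"
    using assms(4,6) sorted_wrt_less_le_last by (fastforce simp: m_def)
  have I'_block: "set I' \<subseteq> {Suc m..n}"
    using assms(5,8,9) sorted_wrt_less_le_last[of I'] sorted_wrt_less_hd_le[of I']
    by (fastforce simp: m_def)
  then have "m \<le> n" using hd_in_set[OF assms(3)] by fastforce
  then interpret two_blocks m n by unfold_locales
  let ?W = "\<lambda>f g. \<Sum>p\<in>Sn n. q ^ inv_count n p * f (pattern p I) * g (pattern p I')"
  have prob: "mallows_prob n q (\<lambda>p. E (pattern p I) \<and> F (pattern p I'))
      = ?W (\<lambda>s. of_bool (E s)) (\<lambda>s. of_bool (F s)) / ?W (\<lambda>_. 1) (\<lambda>_. 1)" for E F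
    by (simp add: mallows_prob_eq_weighted_sum Z_def of_bool_conj mult.assoc)
  have "?W f g / ?W (\<lambda>_. 1) (\<lambda>_. 1)
      = ?W f (\<lambda>_. 1) / ?W (\<lambda>_. 1) (\<lambda>_. 1) * (?W (\<lambda>_. 1) g / ?W (\<lambda>_. 1) (\<lambda>_. 1))" for f g
    by (rule ratio_product_form[where W = ?W, OF sum_Sn_weighted_patterns[OF I_block I'_block]])
  then show "mallows_prob n q (\<lambda>p. pattern p I = \<sigma> \<and> pattern p I' = \<tau>)
      = mallows_prob n q (\<lambda>p. pattern p I = \<sigma>) * mallows_prob n q (\<lambda>p. pattern p I' = \<tau>)"
    using prob[of "\<lambda>s. s = \<sigma>" "\<lambda>s. s = \<tau>"] prob[of "\<lambda>s. s = \<sigma>" "\<lambda>_. True"]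
      prob[of "\<lambda>_. True" "\<lambda>s. s = \<tau>"]
    by simp
qed

end
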